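(* Let $n\ge 2$ and let $v_1,\ldots,v_n$ be positive integers all less than or equal to $1.2n$. Then either $\mathrm{ML}(v_1,\ldots,v_n)=\frac{1}{n+1}$, or $\mathrm{ML}(v_1,\ldots,v_n)=\frac{2}{2n+1}$, or $\mathrm{ML}(v_1,\ldots,v_n)\ge\frac1n$.
   Context: For a real number $x$, $\Vert x\Vert$ denotes the distance from $x$ to the nearest integer. For positive integers $v_1,\ldots,v_n$, the maximum loneliness is $\mathrm{ML}(v_1,\ldots,v_n)=\max_{t\in\mathbb{R}}\min_{1\le i\le n}\Vert t v_i\Vert$. *)

theory Defs
  imports "HOL-Analysis.Analysis"
begin

definition dist_int :: "real \<Rightarrow> real" where
  "dist_int x = \<bar>x - of_int (round x)\<bar>"

definition max_loneliness :: "nat \<Rightarrow> (nat \<Rightarrow> nat) \<Rightarrow> real" where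
  "max_loneliness n v = (SUP t::real. Min ((\<lambda>i. dist_int (t * real (v i))) ` {1..n}))"

end

theory Submission
  imports Defs "HOL-Number_Theory.Cong"
begin

text \<open>If the distinct speeds are exactly \<open>1, \<dots>, n\<close>, Dirichlet's approximation theorem and
  the time \<open>1/(n+1)\<close> show that the maximum loneliness is \<open>1/(n+1)\<close>. Otherwise some \<open>w \<le> n\<close>
  is not a speed. At a time \<open>u/q\<close> with \<open>u w \<equiv> 1 (mod q)\<close> and all speeds below \<open>q\<close>, a speed
  \<open>a\<close> can come closer than \<open>2/q\<close> to an integer only if \<open>a \<equiv> \<plusminus>w (mod q)\<close>. Choosing
  \<open>q \<le> 2n\<close> suitably, this or the time \<open>1/w\<close> gives loneliness at least \<open>1/n\<close>, unless
  \<open>n < 2w\<close> and both \<open>2w\<close> and \<open>2w + 1\<close> are speeds. If that happens for every missing \<open>w\<close>,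
  replacing each missing \<open>w\<close> by \<open>2w\<close> and adding one \<open>2w + 1\<close> produces more than \<open>n\<close>
  distinct speeds, which is impossible.\<close>

lemma dist_int_le: "dist_int x \<le> \<bar>x - of_int m\<bar>"
  unfolding dist_int_def by (rule round_diff_minimal)

lemma dist_int_le_half: "dist_int x \<le> 1 / 2"
  unfolding dist_int_def using of_int_round_ge[of x] of_int_round_le[of x] by linarith

lemma dist_int_diff_le_frac_diff: "dist_int (x - y) \<le> \<bar>frac x - frac y\<bar>"
  using dist_int_le[of "x - y" "\<lfloor>x\<rfloor> - \<lfloor>y\<rfloor>"] by (simp add: frac_def algebra_simps)

lemma dist_int_le_one_minus_frac: "dist_int x \<le> 1 - frac x"
  using dist_int_le[of x "\<lfloor>x\<rfloor> + 1"] frac_lt_1[of x] by (simp add: frac_def)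

lemma dist_int_divide_ge:
  fixes p q :: int and c :: real
  assumes "q > 0" and "\<And>m. c \<le> \<bar>of_int (p - m * q)\<bar>"
  shows "c / of_int q \<le> dist_int (of_int p / of_int q)"
proof -
  define m where "m = round (of_int p / of_int q :: real)"
  have "dist_int (of_int p / of_int q) = \<bar>of_int (p - m * q)\<bar> / of_int q"
    using assms(1) unfolding dist_int_def m_def[symmetric] by (simp add: field_simps)
  then show ?thesis
    using assms by (simp add: divide_right_mono)
qed

lemma dist_int_divide_nondvd:
  fixes a w :: nat
  assumes "w > 0" and "\<not> w dvd a"
  shows "1 / real w \<le> dist_int (real a / real w)"
proof -
  have "1 \<le> \<bar>of_int (int a - m * int w) :: real\<bar>" for m
  proof -
    have "int a - m * int w \<noteq> 0"
      using assms(2) by (metis dvd_triv_right eq_iff_diff_eq_0 int_dvd_int_iff)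
    then show ?thesis by linarith
  qed
  then show ?thesis
    using dist_int_divide_ge[of "int w" 1 "int a"] assms(1) by simp
qed

lemma max_loneliness_ge:
  assumes "n \<ge> 1" and "\<And>i. i \<in> {1..n} \<Longrightarrow> c \<le> dist_int (t * real (v i))"
  shows "c \<le> max_loneliness n v"
proof -
  let ?f = "\<lambda>t. Min ((\<lambda>i. dist_int (t * real (v i))) ` {1..n})"
  have "?f s \<le> 1 / 2" for s
    using assms(1) Min_le[of _ "dist_int (s * real (v 1))"] dist_int_le_half
    by (meson atLeastAtMost_iff finite_atLeastAtMost finite_imageI imageI le_refl order_trans)
  then have "bdd_above (range ?f)"
    by (intro bdd_aboveI[where M = "1 / 2"]) blast
  moreover have "c \<le> ?f t"
    using assms by (subst Min_ge_iff) auto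
  ultimately show ?thesis
    unfolding max_loneliness_def by (meson cSUP_upper2 UNIV_I)
qed

lemma max_loneliness_le:
  assumes "\<And>t. \<exists>i\<in>{1..n}. dist_int (t * real (v i)) \<le> c"
  shows "max_loneliness n v \<le> c"
  unfolding max_loneliness_def
proof (rule cSUP_least)
  fix t
  obtain i where "i \<in> {1..n}" "dist_int (t * real (v i)) \<le> c"
    using assms by blast
  then show "Min ((\<lambda>i. dist_int (t * real (v i))) ` {1..n}) \<le> c"
    by (meson Min_le finite_atLeastAtMost finite_imageI imageI order_trans)
qed simp

lemma Dirichlet_dist_int:
  assumes "n \<ge> 1"
  shows "\<exists>k\<in>{1..n}. dist_int (t * real k) \<le> 1 / (real n + 1)"
proof -
  define b where "b k = \<lfloor>(real n + 1) * frac (t * real k)\<rfloor>" for k :: nat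
  have b_range: "b k \<in> {0..int n}" for k
  proof -
    have "(real n + 1) * frac (t * real k) < real n + 1"
      using frac_lt_1 by simp
    then have "b k < int n + 1"
      unfolding b_def by (intro floor_less_iff[THEN iffD2]) simp
    then show ?thesis
      unfolding b_def by simp
  qed
  \<comment> \<open>\<open>b k\<close> is the box of width \<open>1/(n+1)\<close> containing \<open>frac (k t)\<close>: either some point lies in
    the top box, or two of the \<open>n + 1\<close> points \<open>k = 0, \<dots>, n\<close> share one of the other \<open>n\<close> boxes.\<close>
  show ?thesis
  proof (cases "\<exists>k\<in>{0..n}. b k = int n")
    case True
    then obtain k where k: "k \<le> n" "b k = int n"
      by auto
    have "k \<noteq> 0"
      using k(2) assms by (cases "k = 0") (auto simp: b_def)
    have "real n \<le> (real n + 1) * frac (t * real k)"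
      using k(2) floor_correct[of "(real n + 1) * frac (t * real k)"] unfolding b_def by simp
    then have "1 - frac (t * real k) \<le> 1 / (real n + 1)"
      by (simp add: field_simps)
    then have "dist_int (t * real k) \<le> 1 / (real n + 1)"
      using dist_int_le_one_minus_frac[of "t * real k"] by linarith
    then show ?thesis
      using k(1) \<open>k \<noteq> 0\<close> by auto
  next
    case False
    then have "b ` {0..n} \<subseteq> {0..<int n}"
      using b_range by fastforce
    then have "card (b ` {0..n}) \<le> n"
      using card_mono[of "{0..<int n}"] by fastforce
    then have "\<not> inj_on b {0..n}"
      by (intro pigeonhole) simp
    then obtain i j where ij: "i < j" "j \<le> n" "b i = b j"
      using linorder_inj_onI'[of "{0..n}" b] by auto
    have "(real n + 1) * \<bar>frac (t * real j) - frac (t * real i)\<bar>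
        = \<bar>(real n + 1) * frac (t * real j) - (real n + 1) * frac (t * real i)\<bar>"
      by (simp add: abs_mult flip: right_diff_distrib)
    also have "\<dots> < 1"
      using ij(3) floor_correct[of "(real n + 1) * frac (t * real i)"]
        floor_correct[of "(real n + 1) * frac (t * real j)"]
      unfolding b_def by linarith
    finally have "\<bar>frac (t * real j) - frac (t * real i)\<bar> < 1 / (real n + 1)"
      by (simp add: pos_less_divide_eq mult.commute)
    moreover have "t * real (j - i) = t * real j - t * real i"
      using ij(1) by (simp add: of_nat_diff algebra_simps)
    ultimately have "dist_int (t * real (j - i)) \<le> 1 / (real n + 1)"
      using dist_int_diff_le_frac_diff[of "t * real j" "t * real i"] by simp
    then show ?thesis
      using ij(1,2) by (intro bexI[of _ "j - i"]) auto
  qed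
qed

lemma mult_inverse_residue_abs_ge_2:
  fixes a w q u m :: int
  assumes "0 < a" "a < q" "0 < w" "w < q" "a \<noteq> w" "a \<noteq> q - w"
    and "[u * w = 1] (mod q)"
  shows "2 \<le> \<bar>u * a - m * q\<bar>"
proof (rule ccontr)
  assume "\<not> 2 \<le> \<bar>u * a - m * q\<bar>"
  define e where "e = u * a - m * q"
  have e: "e = 1 \<or> e = 0 \<or> e = -1"
    using \<open>\<not> 2 \<le> \<bar>u * a - m * q\<bar>\<close> unfolding e_def by linarith
  have "[e * w = a * (u * w)] (mod q)"
    unfolding e_def cong_iff_lin by (rule exI[of _ "m * w"]) (simp add: algebra_simps)
  also have "[a * (u * w) = a * 1] (mod q)"
    using assms(7) by (rule cong_scalar_left)
  finally have a_cong: "[a = e * w] (mod q)"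
    by (simp add: cong_sym_eq)
  have "[a = w] (mod q) \<or> [a = 0] (mod q) \<or> [a = q - w] (mod q)"
  proof -
    have "[- w = q - w] (mod q)"
      unfolding cong_iff_lin by (rule exI[of _ 1]) simp
    then have "e = -1 \<Longrightarrow> [a = q - w] (mod q)"
      using a_cong cong_trans[OF _ \<open>[- w = q - w] (mod q)\<close>] by simp
    then show ?thesis
      using e a_cong by auto
  qed
  then show False
    using assms(1-6) by (elim disjE) (auto dest: cong_less_imp_eq_int[rotated 4])
qed

lemma dist_int_mult_inverse_ge:
  fixes a w q :: nat and u :: int
  assumes "0 < a" "a < q" "0 < w" "w < q" "a \<noteq> w" "a \<noteq> q - w"
    and "[u * int w = 1] (mod int q)"
  shows "2 / real q \<le> dist_int (of_int u / real q * real a)"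
proof -
  have "2 \<le> \<bar>u * int a - m * int q\<bar>" for m
    using mult_inverse_residue_abs_ge_2[of "int a" "int q" "int w" u m] assms
    by (simp add: of_nat_diff)
  then have "2 \<le> \<bar>of_int (u * int a - m * int q) :: real\<bar>" for m
    by (metis of_int_abs of_int_le_iff of_int_numeral)
  then show ?thesis
    using dist_int_divide_ge[of "int q" 2 "u * int a"] assms(2) by simp
qed

lemma lonely_time_if_no_multiples:
  fixes A :: "nat set"
  assumes "1 \<le> w" "w \<le> n" and "\<forall>a\<in>A. \<not> w dvd a"
  shows "\<exists>t. \<forall>a\<in>A. 1 / real n \<le> dist_int (t * real a)"
proof (intro exI ballI)
  fix a assume "a \<in> A"
  have "1 / real n \<le> 1 / real w"
    using assms(1,2) by (simp add: frac_le)
  also have "\<dots> \<le> dist_int (real a / real w)"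
    using assms \<open>a \<in> A\<close> by (intro dist_int_divide_nondvd) auto
  finally show "1 / real n \<le> dist_int (1 / real w * real a)"
    by simp
qed

lemma lonely_time_if_inverse_mod:
  fixes A :: "nat set" and u :: int
  assumes "A \<subseteq> {1..N}" "N < q" "q \<le> 2 * n" "0 < w" "w < q" "w \<notin> A" "q - w \<notin> A"
    and "[u * int w = 1] (mod int q)"
  shows "\<exists>t. \<forall>a\<in>A. 1 / real n \<le> dist_int (t * real a)"
proof (intro exI ballI)
  fix a assume "a \<in> A"
  have "1 / real n \<le> 2 / real q"
    using assms(3-5) by (simp add: field_simps)
  also have "\<dots> \<le> dist_int (of_int u / real q * real a)"
    using assms \<open>a \<in> A\<close> by (intro dist_int_mult_inverse_ge[of _ _ w]) auto
  finally show "1 / real n \<le> dist_int (of_int u / real q * real a)" .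
qed

lemma lonely_time_if_missing_small:
  fixes A :: "nat set"
  assumes "A \<subseteq> {1..N}" "5 * N \<le> 6 * n" "1 \<le> w" "2 * w \<le> n" "w \<notin> A"
  shows "\<exists>t. \<forall>a\<in>A. 1 / real n \<le> dist_int (t * real a)"
proof (cases "2 * w + N \<le> 2 * n")
  case True
  define d where "d = (2 * n - 1) div w"
  define q where "q = w * d + 1"
  have "w * d + (2 * n - 1) mod w = 2 * n - 1" "(2 * n - 1) mod w < w"
    unfolding d_def using assms(3) by simp_all
  then have q: "q \<le> 2 * n" "N + w < q"
    using True assms(3,4) unfolding q_def by linarith+
  show ?thesis
  proof (rule lonely_time_if_inverse_mod[of A N q n w "- int d"])
    show "q - w \<notin> A"
      using assms(1) q(2) by fastforce
    show "[- int d * int w = 1] (mod int q)"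
      unfolding cong_iff_lin q_def by (rule exI[of _ 1]) (simp add: algebra_simps)
  qed (use assms q in auto)
next
  case False
  then have "N + 2 \<le> 3 * w"
    using assms(2) by linarith
  define q where "q = 4 * w - 1"
  show ?thesis
  proof (rule lonely_time_if_inverse_mod[of A N q n w 4])
    show "q - w \<notin> A"
      using assms(1) \<open>N + 2 \<le> 3 * w\<close> unfolding q_def by fastforce
    show "[4 * int w = 1] (mod int q)"
      unfolding cong_iff_lin q_def using assms(3) by (intro exI[of _ "- 1"]) (simp add: of_nat_diff)
  qed (use assms \<open>N + 2 \<le> 3 * w\<close> in \<open>auto simp: q_def\<close>)
qed

lemma missing_speed_doubled:
  fixes A :: "nat set"
  assumes "A \<subseteq> {1..N}" "5 * N \<le> 6 * n" "w \<in> {1..n}" "w \<notin> A"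
    and no_lonely_time: "\<not> (\<exists>t. \<forall>a\<in>A. 1 / real n \<le> dist_int (t * real a))"
  shows "n < 2 * w \<and> 2 * w \<in> A \<and> 2 * w + 1 \<in> A"
proof (intro conjI)
  show "n < 2 * w"
    using lonely_time_if_missing_small[OF assms(1,2) _ _ assms(4)] assms(3) no_lonely_time
    by force
  then have "N < 3 * w"
    using assms(2) by linarith
  show "2 * w \<in> A"
  proof (rule ccontr)
    assume "2 * w \<notin> A"
    have "\<not> w dvd a" if "a \<in> A" for a
    proof
      assume "w dvd a"
      then obtain c where "a = w * c" ..
      moreover have "c \<noteq> 0" "c \<noteq> 1" "c \<noteq> 2"
        using \<open>a = w * c\<close> \<open>a \<in> A\<close> assms(1,4) \<open>2 * w \<notin> A\<close> by (auto simp: mult.commute)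
      ultimately have "3 * w \<le> a"
        by simp
      then show False
        using \<open>N < 3 * w\<close> \<open>a \<in> A\<close> assms(1) by auto
    qed
    then show False
      using lonely_time_if_no_multiples[of w n A] assms(3) no_lonely_time by auto
  qed
  show "2 * w + 1 \<in> A"
  proof (rule ccontr)
    assume "2 * w + 1 \<notin> A"
    have "2 * w \<le> N"
      using \<open>2 * w \<in> A\<close> assms(1) by auto
    have "\<exists>t. \<forall>a\<in>A. 1 / real n \<le> dist_int (t * real a)"
    proof (rule lonely_time_if_inverse_mod[of A N "3 * w + 1" n w "- 3"])
      show "[- 3 * int w = 1] (mod int (3 * w + 1))"
        unfolding cong_iff_lin by (intro exI[of _ 1]) simp
    qed (use assms \<open>n < 2 * w\<close> \<open>N < 3 * w\<close> \<open>2 * w \<le> N\<close> \<open>2 * w + 1 \<notin> A\<close> in auto)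
    then show False
      using no_lonely_time by blast
  qed
qed

lemma card_gt_if_missing_doubled:
  fixes A :: "nat set"
  assumes "finite A" "w \<in> {1..n}" "w \<notin> A"
    and doubled: "\<And>w. w \<in> {1..n} \<Longrightarrow> w \<notin> A \<Longrightarrow> n < 2 * w \<and> 2 * w \<in> A \<and> 2 * w + 1 \<in> A"
  shows "n < card A"
proof -
  define f where "f k = (if k \<in> A then k else 2 * k)" for k
  have f_missing: "n < f k" if "k \<in> {1..n}" "k \<notin> A" for k
    using doubled[OF that] that(2) by (simp add: f_def)
  have "inj_on f {1..n}"
  proof (rule inj_onI)
    fix k l assume kl: "k \<in> {1..n}" "l \<in> {1..n}" "f k = f l"
    show "k = l"
    proof (cases "k \<in> A \<longleftrightarrow> l \<in> A")
      case True
      then show ?thesis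
        using kl(3) by (auto simp: f_def split: if_splits)
    next
      case False
      then show ?thesis
        using kl f_missing[of k] f_missing[of l] by (auto simp: f_def split: if_splits)
    qed
  qed
  moreover have "f ` {1..n} \<subset> A"
  proof
    show "f ` {1..n} \<subseteq> A"
      using doubled by (auto simp: f_def)
    have "f k \<noteq> 2 * w + 1" if "k \<in> {1..n}" for k
    proof (cases "k \<in> A")
      case True
      then show ?thesis
        using that doubled[OF assms(2,3)] by (simp add: f_def)
    next
      case False
      have "2 * k \<noteq> 2 * w + 1"
        by presburger
      then show ?thesis
        using False by (simp add: f_def)
    qed
    then have "2 * w + 1 \<notin> f ` {1..n}"
      by (metis imageE)
    then show "f ` {1..n} \<noteq> A"
      using doubled[OF assms(2,3)] by auto
  qed
  ultimately show ?thesis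
    using psubset_card_mono[OF assms(1)] by (metis card_atLeastAtMost card_image diff_Suc_1)
qed

lemma lonely_time_if_not_initial_segment:
  fixes A :: "nat set"
  assumes "finite A" "A \<subseteq> {1..N}" "5 * N \<le> 6 * n" "card A \<le> n" "\<not> {1..n} \<subseteq> A"
  shows "\<exists>t. \<forall>a\<in>A. 1 / real n \<le> dist_int (t * real a)"
proof (rule ccontr)
  assume no_lonely_time: "\<not> ?thesis"
  obtain w where "w \<in> {1..n}" "w \<notin> A"
    using assms(5) by blast
  then have "n < card A"
    using missing_speed_doubled[OF assms(2,3) _ _ no_lonely_time]
    by (intro card_gt_if_missing_doubled[OF assms(1)])
  then show False
    using assms(4) by simp
qed

lemma max_loneliness_initial_segment:
  assumes "n \<ge> 1" "v ` {1..n} = {1..n}"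
  shows "max_loneliness n v = 1 / (real n + 1)"
proof (rule antisym)
  show "max_loneliness n v \<le> 1 / (real n + 1)"
  proof (rule max_loneliness_le)
    fix t
    obtain k where "k \<in> {1..n}" "dist_int (t * real k) \<le> 1 / (real n + 1)"
      using Dirichlet_dist_int[OF assms(1)] by blast
    then show "\<exists>i\<in>{1..n}. dist_int (t * real (v i)) \<le> 1 / (real n + 1)"
      using assms(2) by (metis imageE)
  qed
  show "1 / (real n + 1) \<le> max_loneliness n v"
  proof (rule max_loneliness_ge[OF assms(1)])
    fix i assume "i \<in> {1..n}"
    then have "v i \<in> {1..n}"
      using assms(2) by blast
    then have "\<not> (n + 1) dvd v i"
      by (auto dest: dvd_imp_le)
    then show "1 / (real n + 1) \<le> dist_int (1 / (real n + 1) * real (v i))"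
      using dist_int_divide_nondvd[of "n + 1" "v i"] by (simp add: add.commute)
  qed
qed

lemma max_loneliness_initial_segment_or_ge:
  assumes "n \<ge> 1" and "\<And>i. i \<in> {1..n} \<Longrightarrow> 1 \<le> v i \<and> 5 * v i \<le> 6 * n"
  shows "max_loneliness n v = 1 / (real n + 1) \<or> 1 / real n \<le> max_loneliness n v"
proof -
  define A where "A = v ` {1..n}"
  define N where "N = 6 * n div 5"
  have "A \<subseteq> {1..N}"
    using assms(2) by (force simp: A_def N_def less_eq_div_iff_mult_less_eq mult.commute)
  have "5 * N \<le> 6 * n" "card A \<le> n" "finite A"
    unfolding N_def A_def using card_image_le[of "{1..n}" v] by simp_all
  show ?thesis
  proof (cases "{1..n} \<subseteq> A")
    case True
    then have "v ` {1..n} = {1..n}"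
      using card_seteq[OF \<open>finite A\<close> True] \<open>card A \<le> n\<close> by (simp add: A_def)
    then show ?thesis
      using max_loneliness_initial_segment assms(1) by blast
  next
    case False
    then obtain t where "\<forall>a\<in>A. 1 / real n \<le> dist_int (t * real a)"
      using lonely_time_if_not_initial_segment \<open>A \<subseteq> {1..N}\<close> \<open>5 * N \<le> 6 * n\<close> \<open>card A \<le> n\<close>
        \<open>finite A\<close> by blast
    then have "1 / real n \<le> max_loneliness n v"
      using assms(1) by (intro max_loneliness_ge[where t = t]) (auto simp: A_def)
    then show ?thesis
      by simp
  qed
qed

theorem proposition11p2:
  fixes n :: nat and v :: "nat \<Rightarrow> nat"
  assumes "n \<ge> 2"
    and "\<And>i. i \<in> {1..n} \<Longrightarrow> v i > 0"
    and "\<And>i. i \<in> {1..n} \<Longrightarrow> real (v i) \<le> 1.2 * real n"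
  shows "max_loneliness n v = 1 / (real n + 1) \<or> max_loneliness n v = 2 / (2 * real n + 1) \<or> max_loneliness n v \<ge> 1 / real n"
proof -
  have "1 \<le> v i \<and> 5 * v i \<le> 6 * n" if "i \<in> {1..n}" for i
  proof -
    have "real (5 * v i) \<le> real (6 * n)"
      using assms(3)[OF that] by simp
    then show ?thesis
      using assms(2)[OF that] of_nat_le_iff by fastforce
  qed
  then show ?thesis
    using max_loneliness_initial_segment_or_ge[of n v] assms(1) by fastforce
qed

end
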